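(* Let $G$ be a permutation graph or a near-permutation graph on $n$ vertices whose odd girth equals $\frac{n}{2}$. If $G$ is not $3$-edge-colourable, then $G$ is isomorphic to the Petersen graph or to the Petersen graph minus one edge.
   Context: All graphs are finite and simple. A cubic graph $G$ on $n$ vertices is a permutation graph if $G$ has a perfect matching $M$ such that $G-M$ (deleting the edges of $M$) is the disjoint union of two chordless cycles $A$ and $B$, each of length $\frac{n}{2}$. A near-permutation graph is a graph obtained from such a permutation graph by deleting one edge of the perfect matching $M$. The odd girth of a graph is the length of a shortest odd cycle. A graph is $3$-edge-colourable if it admits a proper edge-colouring with $3$ colours. *)

theory Defs
  imports Main "HOL-Library.Extended_Nat"
begin

definition simple_graph :: "'a set \<Rightarrow> 'a set set \<Rightarrow> bool" where
  "simple_graph V E \<longleftrightarrow> finite V \<and>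
     (\<forall>e\<in>E. \<exists>u v. u \<noteq> v \<and> u \<in> V \<and> v \<in> V \<and> e = {u, v})"

definition degree :: "'a set set \<Rightarrow> 'a \<Rightarrow> nat" where
  "degree E v = card {e\<in>E. v \<in> e}"

definition cubic :: "'a set \<Rightarrow> 'a set set \<Rightarrow> bool" where
  "cubic V E \<longleftrightarrow> simple_graph V E \<and> (\<forall>v\<in>V. degree E v = 3)"

definition perfect_matching :: "'a set \<Rightarrow> 'a set set \<Rightarrow> 'a set set \<Rightarrow> bool" where
  "perfect_matching V E M \<longleftrightarrow> M \<subseteq> E \<and> (\<forall>v\<in>V. \<exists>!e. e \<in> M \<and> v \<in> e)"

definition cycle_graph :: "'a set \<Rightarrow> 'a set set \<Rightarrow> nat \<Rightarrow> bool" where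
  "cycle_graph W F k \<longleftrightarrow> k \<ge> 3 \<and>
     (\<exists>f. bij_betw f {0..<k} W \<and> F = {{f i, f ((i + 1) mod k)} | i. i < k})"

definition chordless_in :: "'a set set \<Rightarrow> 'a set \<Rightarrow> 'a set set \<Rightarrow> bool" where
  "chordless_in E W F \<longleftrightarrow> (\<forall>e\<in>E. e \<subseteq> W \<longrightarrow> e \<in> F)"

definition permutation_graph_wrt :: "'a set \<Rightarrow> 'a set set \<Rightarrow> 'a set set \<Rightarrow> bool" where
  "permutation_graph_wrt V E M \<longleftrightarrow> cubic V E \<and> perfect_matching V E M \<and>
     (\<exists>VA EA VB EB. V = VA \<union> VB \<and> VA \<inter> VB = {} \<and> E - M = EA \<union> EB \<and>
        cycle_graph VA EA (card V div 2) \<and> cycle_graph VB EB (card V div 2) \<and>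
        chordless_in E VA EA \<and> chordless_in E VB EB)"

definition permutation_graph :: "'a set \<Rightarrow> 'a set set \<Rightarrow> bool" where
  "permutation_graph V E \<longleftrightarrow> (\<exists>M. permutation_graph_wrt V E M)"

definition near_permutation_graph :: "'a set \<Rightarrow> 'a set set \<Rightarrow> bool" where
  "near_permutation_graph V E \<longleftrightarrow>
     (\<exists>E' M e. permutation_graph_wrt V E' M \<and> e \<in> M \<and> E = E' - {e})"

definition has_cycle :: "'a set \<Rightarrow> 'a set set \<Rightarrow> nat \<Rightarrow> bool" where
  "has_cycle V E k \<longleftrightarrow> k \<ge> 3 \<and>
     (\<exists>f. inj_on f {0..<k} \<and> f ` {0..<k} \<subseteq> V \<and>
          (\<forall>i<k. {f i, f ((i + 1) mod k)} \<in> E))"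

definition odd_girth :: "'a set \<Rightarrow> 'a set set \<Rightarrow> enat" where
  "odd_girth V E = (if \<exists>k. odd k \<and> has_cycle V E k
                    then enat (LEAST k. odd k \<and> has_cycle V E k) else \<infinity>)"

definition three_edge_colourable :: "'a set set \<Rightarrow> bool" where
  "three_edge_colourable E \<longleftrightarrow> (\<exists>c :: 'a set \<Rightarrow> nat. (\<forall>e\<in>E. c e < 3) \<and>
     (\<forall>e\<in>E. \<forall>e'\<in>E. e \<noteq> e' \<and> e \<inter> e' \<noteq> {} \<longrightarrow> c e \<noteq> c e'))"

definition graph_iso :: "'a set \<Rightarrow> 'a set set \<Rightarrow> 'b set \<Rightarrow> 'b set set \<Rightarrow> bool" where
  "graph_iso V E V' E' \<longleftrightarrow> (\<exists>f. bij_betw f V V' \<and>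
     (\<forall>u\<in>V. \<forall>v\<in>V. {u, v} \<in> E \<longleftrightarrow> {f u, f v} \<in> E'))"

text \<open>Petersen graph on {0..9}: outer 5-cycle, spokes, inner pentagram.\<close>
definition petersen_V :: "nat set" where
  "petersen_V = {0..<10}"

definition petersen_E :: "nat set set" where
  "petersen_E = {{i, (i + 1) mod 5} | i. i < 5} \<union> {{i, i + 5} | i. i < 5}
                \<union> {{i + 5, (i + 2) mod 5 + 5} | i. i < 5}"

end

theory Submission
  imports Defs
begin

text \<open>The hypothesis on the odd girth makes the cycle length \<open>k\<close> odd and rules out odd cycles
  shorter than \<open>k\<close>. Write the graph as two chordless \<open>k\<close>-cycles \<open>a\<close>, \<open>b\<close> and the matching
  \<open>a x \<mapsto> b (s x)\<close>. If \<open>s (i + 1) = s i \<plusminus> 1\<close> for some \<open>i\<close>, then \<open>a i, a (i + 1), b (s (i + 1)),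
  b (s i)\<close> is a 4-cycle, and the two odd cycles can be 3-edge-coloured so that the colour left free
  at both ends of every matching edge is the same; so the graph and all its subgraphs are
  3-edge-colourable. Otherwise, whenever the matching edges at \<open>a i\<close> and \<open>a (i + 1)\<close> are not
  deleted, one of the two cycles formed by \<open>a i, a (i + 1)\<close> and an arc of \<open>b\<close> is odd and hence
  at least \<open>k\<close> long, which forces \<open>s (i + 1) - s i \<equiv> \<plusminus>3 (mod k)\<close>. This is impossible for
  \<open>k = 3\<close>; for \<open>k \<ge> 7\<close> two consecutive such steps give an odd cycle of length \<open>k - 2\<close> or
  contradict injectivity of \<open>s\<close>; and for \<open>k = 5\<close> the map \<open>s\<close> is multiplication by 2 or 3,
  which yields the Petersen graph.\<close>

section \<open>Edge colourings\<close>

definition edge_3_colouring :: "'a set set \<Rightarrow> ('a set \<Rightarrow> nat) \<Rightarrow> bool" where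
  "edge_3_colouring E c \<longleftrightarrow>
     (\<forall>e\<in>E. c e < 3) \<and> (\<forall>e\<in>E. \<forall>e'\<in>E. e \<noteq> e' \<and> e \<inter> e' \<noteq> {} \<longrightarrow> c e \<noteq> c e')"

definition avoiding_3_colouring :: "'a set set \<Rightarrow> ('a set \<Rightarrow> nat) \<Rightarrow> ('a \<Rightarrow> nat) \<Rightarrow> bool" where
  "avoiding_3_colouring E c m \<longleftrightarrow> edge_3_colouring E c \<and> (\<forall>e\<in>E. \<forall>v\<in>e. c e \<noteq> m v)"

lemma three_edge_colourable_iff: "three_edge_colourable E \<longleftrightarrow> (\<exists>c. edge_3_colouring E c)"
  by (simp add: three_edge_colourable_def edge_3_colouring_def)

lemma edge_3_colouring_mono: "E \<subseteq> E' \<Longrightarrow> edge_3_colouring E' c \<Longrightarrow> edge_3_colouring E c"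
  unfolding edge_3_colouring_def by (meson subsetD)

lemma three_edge_colourable_mono:
  "E \<subseteq> E' \<Longrightarrow> three_edge_colourable E' \<Longrightarrow> three_edge_colourable E"
  using edge_3_colouring_mono by (metis three_edge_colourable_iff)

lemma factor_through:
  assumes "\<And>x y. L x = L y \<Longrightarrow> f x = f y"
  obtains g where "\<And>x. g (L x) = f x"
proof
  fix x
  have "L (SOME y. L y = L x) = L x" by (rule someI) (rule refl)
  then show "f (SOME y. L y = L x) = f x" by (rule assms)
qed

lemma edge_3_colouring_Un:
  assumes "edge_3_colouring C c" "edge_3_colouring D d"
    and "\<And>e e'. e \<in> C \<Longrightarrow> e' \<in> D \<Longrightarrow> e \<inter> e' = {}"
  shows "edge_3_colouring (C \<union> D) (\<lambda>e. if e \<in> C then c e else d e)"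
  unfolding edge_3_colouring_def
proof (intro conjI ballI impI)
  fix e assume "e \<in> C \<union> D"
  then show "(if e \<in> C then c e else d e) < 3" using assms(1,2) by (auto simp: edge_3_colouring_def)
next
  fix e e' assume e: "e \<in> C \<union> D" and e': "e' \<in> C \<union> D" and adj: "e \<noteq> e' \<and> e \<inter> e' \<noteq> {}"
  have "c e \<noteq> c e'" if "e \<in> C" "e' \<in> C"
    using assms(1) that adj by (simp add: edge_3_colouring_def)
  moreover have "d e \<noteq> d e'" if "e \<in> D" "e' \<in> D"
    using assms(2) that adj by (simp add: edge_3_colouring_def)
  moreover have "e \<notin> C \<or> e' \<notin> D" "e' \<notin> C \<or> e \<notin> D"
    using assms(3)[of e e'] assms(3)[of e' e] adj by (auto simp: Int_commute)
  ultimately show "(if e \<in> C then c e else d e) \<noteq> (if e' \<in> C then c e' else d e')"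
    using e e' by auto
qed

lemma avoiding_3_colouring_Un:
  assumes C: "avoiding_3_colouring C c m" and D: "avoiding_3_colouring D d m'"
    and inside: "\<And>e. e \<in> C \<Longrightarrow> e \<subseteq> W" and outside: "\<And>e. e \<in> D \<Longrightarrow> e \<inter> W = {}"
  shows "avoiding_3_colouring (C \<union> D) (\<lambda>e. if e \<in> C then c e else d e)
    (\<lambda>v. if v \<in> W then m v else m' v)"
proof -
  have "edge_3_colouring (C \<union> D) (\<lambda>e. if e \<in> C then c e else d e)"
  proof (rule edge_3_colouring_Un)
    show "edge_3_colouring C c" "edge_3_colouring D d"
      using C D by (simp_all add: avoiding_3_colouring_def)
    show "e \<inter> e' = {}" if "e \<in> C" "e' \<in> D" for e e'
      using inside[OF that(1)] outside[OF that(2)] by blast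
  qed
  moreover have "(if e \<in> C then c e else d e) \<noteq> (if v \<in> W then m v else m' v)"
    if "e \<in> C \<union> D" "v \<in> e" for e v
  proof (cases "e \<in> C")
    case True
    then have "v \<in> W" using inside that(2) by blast
    then show ?thesis using True that(2) C by (simp add: avoiding_3_colouring_def)
  next
    case False
    then have "e \<in> D" using that(1) by blast
    then have "v \<notin> W" using outside that(2) by blast
    then show ?thesis using False \<open>e \<in> D\<close> that(2) D by (simp add: avoiding_3_colouring_def)
  qed
  ultimately show ?thesis by (simp add: avoiding_3_colouring_def)
qed

lemma three_edge_colourable_add_matching:
  assumes c: "avoiding_3_colouring C c m" and m3: "\<And>v. m v < 3"
    and disj: "\<And>e e'. e \<in> M \<Longrightarrow> e' \<in> M \<Longrightarrow> e \<noteq> e' \<Longrightarrow> e \<inter> e' = {}"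
    and const: "\<And>e u v. e \<in> M \<Longrightarrow> u \<in> e \<Longrightarrow> v \<in> e \<Longrightarrow> m u = m v"
    and nonempty: "{} \<notin> M"
  shows "three_edge_colourable (C \<union> M)"
proof -
  define c' where "c' e = (if e \<in> M then m (SOME v. v \<in> e) else c e)" for e
  have c'M: "c' e = m v" if "e \<in> M" "v \<in> e" for e v
  proof -
    have "(SOME v. v \<in> e) \<in> e" using that(2) by (rule someI)
    then show ?thesis using that const[of e "SOME v. v \<in> e" v] by (simp add: c'_def)
  qed
  have c'C: "c' e = c e" if "e \<notin> M" for e using that by (simp add: c'_def)
  have free: "c e \<noteq> m v" if "e \<in> C" "v \<in> e" for e v
    using c that by (simp add: avoiding_3_colouring_def)
  have "edge_3_colouring (C \<union> M) c'"
    unfolding edge_3_colouring_def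
  proof (intro conjI ballI impI)
    fix e assume "e \<in> C \<union> M"
    then show "c' e < 3"
      using c m3 by (auto simp: c'_def avoiding_3_colouring_def edge_3_colouring_def)
  next
    fix e e' assume e: "e \<in> C \<union> M" and e': "e' \<in> C \<union> M" and adj: "e \<noteq> e' \<and> e \<inter> e' \<noteq> {}"
    then obtain v where v: "v \<in> e" "v \<in> e'" by blast
    consider "e \<in> M" "e' \<in> M" | "e \<in> M" "e' \<in> C" "e' \<notin> M" | "e \<in> C" "e \<notin> M" "e' \<in> M"
      | "e \<in> C" "e \<notin> M" "e' \<in> C" "e' \<notin> M" using e e' by blast
    then show "c' e \<noteq> c' e'"
    proof cases
      case 1 then show ?thesis using disj[of e e'] adj by simp
    next
      case 2 then show ?thesis using c'M[of e v] c'C[of e'] free[of e' v] v by simp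
    next
      case 3 then show ?thesis using c'M[of e' v] c'C[of e] free[of e v] v by simp
    next
      case 4
      then show ?thesis using c'C c adj by (simp add: avoiding_3_colouring_def edge_3_colouring_def)
    qed
  qed
  then show ?thesis unfolding three_edge_colourable_iff by blast
qed

section \<open>Odd cycles\<close>

definition cycle_edges :: "(int \<Rightarrow> 'a) \<Rightarrow> 'a set set" where
  "cycle_edges c = range (\<lambda>x. {c x, c (x + 1)})"

lemma cycle_edges_subset_range: "e \<in> cycle_edges c \<Longrightarrow> e \<subseteq> range c"
  by (auto simp: cycle_edges_def)

lemma cycle_edges_reflect: "cycle_edges (\<lambda>x. c (- x)) = cycle_edges c"
proof -
  have "{c (- x), c (- (x + 1))} = {c (- x - 1), c (- x - 1 + 1)}" for x
    by (simp add: insert_commute)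
  moreover have "{c x, c (x + 1)} = {c (- (- x - 1)), c (- (- x - 1 + 1))}" for x
    by (simp add: insert_commute add.commute)
  ultimately show ?thesis unfolding cycle_edges_def by blast
qed

definition free_colour :: "'a \<Rightarrow> 'a \<Rightarrow> 'a \<Rightarrow> nat" where
  "free_colour u w v = (if v = u then 0 else if v = w then 1 else 2)"

(* Colour 2 on the edge at position 0 and alternately 0, 1 on the others, which works because k
   is odd. Colour 0 is then free at position 0, colour 1 at position 1, and colour 2 elsewhere. *)
definition cycle_colour :: "int \<Rightarrow> nat" where
  "cycle_colour p = (if p = 0 then 2 else if odd p then 0 else 1)"

definition position_colour :: "int \<Rightarrow> nat" where
  "position_colour p = (if p = 0 then 0 else if p = 1 then 1 else 2)"

lemma cycle_colour_succ:
  assumes "0 \<le> p" "p < k" "odd k" "3 \<le> k"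
  shows "cycle_colour p \<noteq> cycle_colour ((p + 1) mod k)"
proof (cases "p + 1 = k")
  case True
  then show ?thesis using assms by (auto simp: cycle_colour_def)
next
  case False
  then have "(p + 1) mod k = p + 1" using assms by simp
  then show ?thesis using assms by (simp add: cycle_colour_def)
qed

lemma cycle_colour_avoids:
  assumes "0 \<le> p" "p < k" "odd k" "3 \<le> k"
  shows "cycle_colour p \<noteq> position_colour p"
    and "cycle_colour p \<noteq> position_colour ((p + 1) mod k)"
proof -
  show "cycle_colour p \<noteq> position_colour p"
    by (simp add: cycle_colour_def position_colour_def)
  show "cycle_colour p \<noteq> position_colour ((p + 1) mod k)"
  proof (cases "p + 1 = k")
    case True
    then show ?thesis using assms by (auto simp: cycle_colour_def position_colour_def)
  next
    case False
    then have "(p + 1) mod k = p + 1" using assms by simp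
    then show ?thesis using assms by (simp add: cycle_colour_def position_colour_def)
  qed
qed

locale odd_cycle =
  fixes k :: int and c :: "int \<Rightarrow> 'a"
  assumes k_ge_3: "3 \<le> k" and k_odd: "odd k"
    and eq_iff: "c x = c y \<longleftrightarrow> k dvd x - y"
begin

definition offset :: "int \<Rightarrow> int \<Rightarrow> int" where
  "offset t y = (y - t) mod k"

lemma offset_range: "0 \<le> offset t y" "offset t y < k"
  using k_ge_3 by (simp_all add: offset_def)

lemma offset_succ: "offset t (y + 1) = (offset t y + 1) mod k"
proof -
  have "y + 1 - t = (y - t) + 1" by simp
  then show ?thesis unfolding offset_def by (simp only: mod_add_left_eq)
qed

lemma offset_eq_iff: "offset t x = offset t y \<longleftrightarrow> k dvd x - y"
proof -
  have "(x - t) - (y - t) = x - y" by simp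
  then show ?thesis unfolding offset_def mod_eq_dvd_iff by simp
qed

lemma free_colour_offset: "free_colour (c t) (c (t + 1)) (c y) = position_colour (offset t y)"
proof -
  have "c y = c t \<longleftrightarrow> offset t y = 0" by (simp add: eq_iff offset_def dvd_eq_mod_eq_0)
  moreover have "c y = c (t + 1) \<longleftrightarrow> offset t y = 1"
    using k_ge_3 mod_eq_dvd_iff[of "y - t" k 1] by (simp add: eq_iff offset_def diff_diff_eq)
  ultimately show ?thesis by (simp add: free_colour_def position_colour_def)
qed

lemma doubleton_in_cycle_edges_iff:
  "{c x, c y} \<in> cycle_edges c \<longleftrightarrow> k dvd y - x - 1 \<or> k dvd x - y - 1"
proof
  assume "{c x, c y} \<in> cycle_edges c"
  then obtain z where "{c x, c y} = {c z, c (z + 1)}" by (auto simp: cycle_edges_def)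
  then have "k dvd x - z \<and> k dvd y - (z + 1) \<or> k dvd x - (z + 1) \<and> k dvd y - z"
    by (auto simp: doubleton_eq_iff eq_iff)
  then show "k dvd y - x - 1 \<or> k dvd x - y - 1"
  proof
    assume h: "k dvd x - z \<and> k dvd y - (z + 1)"
    have "k dvd (y - (z + 1)) - (x - z)" by (rule dvd_diff) (use h in simp_all)
    moreover have "(y - (z + 1)) - (x - z) = y - x - 1" by simp
    ultimately show ?thesis by simp
  next
    assume h: "k dvd x - (z + 1) \<and> k dvd y - z"
    have "k dvd (x - (z + 1)) - (y - z)" by (rule dvd_diff) (use h in simp_all)
    moreover have "(x - (z + 1)) - (y - z) = x - y - 1" by simp
    ultimately show ?thesis by simp
  qed
next
  assume "k dvd y - x - 1 \<or> k dvd x - y - 1"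
  then have "c y = c (x + 1) \<or> c x = c (y + 1)" by (simp add: eq_iff diff_diff_eq)
  then show "{c x, c y} \<in> cycle_edges c"
  proof
    assume "c y = c (x + 1)"
    then show ?thesis using rangeI[of "\<lambda>z. {c z, c (z + 1)}" x] by (simp add: cycle_edges_def)
  next
    assume "c x = c (y + 1)"
    then show ?thesis using rangeI[of "\<lambda>z. {c z, c (z + 1)}" y]
      by (simp add: cycle_edges_def insert_commute)
  qed
qed

lemma edge_eq_iff: "{c x, c (x + 1)} = {c y, c (y + 1)} \<longleftrightarrow> k dvd x - y"
proof
  assume "{c x, c (x + 1)} = {c y, c (y + 1)}"
  then consider "c x = c y" | "c x = c (y + 1)" "c (x + 1) = c y"
    by (auto simp: doubleton_eq_iff)
  then show "k dvd x - y"
  proof cases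
    case 1
    then show ?thesis by (simp add: eq_iff)
  next
    case 2
    then have "k dvd x + 1 - y" "k dvd x - (y + 1)" by (simp_all add: eq_iff)
    then have "k dvd (x + 1 - y) - (x - (y + 1))" by (rule dvd_diff)
    then have "k dvd 2" by simp
    then show ?thesis using k_ge_3 by (simp add: zdvd_not_zless)
  qed
next
  assume "k dvd x - y"
  then have "c x = c y" "c (x + 1) = c (y + 1)" by (simp_all add: eq_iff)
  then show "{c x, c (x + 1)} = {c y, c (y + 1)}" by simp
qed

lemma adjacent_edges:
  assumes "{c x, c (x + 1)} \<noteq> {c y, c (y + 1)}" and "{c x, c (x + 1)} \<inter> {c y, c (y + 1)} \<noteq> {}"
  shows "k dvd y - x - 1 \<or> k dvd x - y - 1"
proof -
  have "\<not> k dvd x - y" using assms(1) edge_eq_iff by blast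
  moreover have "c x = c y \<or> c x = c (y + 1) \<or> c (x + 1) = c y \<or> c (x + 1) = c (y + 1)"
    using assms(2) by auto
  ultimately show ?thesis
    by (auto simp: eq_iff diff_diff_eq[symmetric] dvd_diff_commute)
qed


lemma colouring_avoiding_succ:
  "\<exists>col. avoiding_3_colouring (cycle_edges c) col (free_colour (c t) (c (t + 1)))"
proof -
  have "cycle_colour (offset t x) = cycle_colour (offset t y)"
    if "{c x, c (x + 1)} = {c y, c (y + 1)}" for x y
  proof -
    have "offset t x = offset t y" using that by (simp add: edge_eq_iff offset_eq_iff)
    then show ?thesis by simp
  qed
  then obtain col where col: "\<And>x. col {c x, c (x + 1)} = cycle_colour (offset t x)"
    using factor_through[of "\<lambda>x. {c x, c (x + 1)}" "\<lambda>x. cycle_colour (offset t x)"] by blast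
  have succ: "cycle_colour (offset t z) \<noteq> cycle_colour (offset t (z + 1))" for z
    using cycle_colour_succ[OF offset_range k_odd k_ge_3] by (simp add: offset_succ)
  have "avoiding_3_colouring (cycle_edges c) col (free_colour (c t) (c (t + 1)))"
    unfolding avoiding_3_colouring_def edge_3_colouring_def cycle_edges_def
  proof (intro conjI ballI impI)
    fix e assume "e \<in> range (\<lambda>x. {c x, c (x + 1)})"
    then show "col e < 3" by (auto simp: col cycle_colour_def)
  next
    fix e e' assume "e \<in> range (\<lambda>x. {c x, c (x + 1)})" "e' \<in> range (\<lambda>x. {c x, c (x + 1)})"
      and adj: "e \<noteq> e' \<and> e \<inter> e' \<noteq> {}"
    then obtain x y where e: "e = {c x, c (x + 1)}" and e': "e' = {c y, c (y + 1)}" by blast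
    from adjacent_edges adj e e' have "k dvd y - x - 1 \<or> k dvd x - y - 1" by blast
    then have "offset t y = offset t (x + 1) \<or> offset t x = offset t (y + 1)"
      by (simp add: offset_eq_iff diff_diff_eq)
    then show "col e \<noteq> col e'" using succ[of x] succ[of y] by (auto simp: e e' col)
  next
    fix e v assume "e \<in> range (\<lambda>x. {c x, c (x + 1)})" "v \<in> e"
    then obtain x where e: "e = {c x, c (x + 1)}" and v: "v = c x \<or> v = c (x + 1)" by blast
    show "col e \<noteq> free_colour (c t) (c (t + 1)) v"
      using v cycle_colour_avoids[OF offset_range k_odd k_ge_3]
      by (auto simp: e col free_colour_offset offset_succ)
  qed
  then show ?thesis by blast
qed

lemma colouring_avoiding:
  assumes "{u, w} \<in> cycle_edges c"
  shows "\<exists>col. avoiding_3_colouring (cycle_edges c) col (free_colour u w)"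
proof -
  obtain t where "{u, w} = {c t, c (t + 1)}" using assms by (auto simp: cycle_edges_def)
  then consider "u = c t" "w = c (t + 1)" | "u = c (t + 1)" "w = c t"
    by (auto simp: doubleton_eq_iff)
  then show ?thesis
  proof cases
    case 1
    then show ?thesis using colouring_avoiding_succ by blast
  next
    case 2
    interpret reflected: odd_cycle k "\<lambda>x. c (- x)"
    proof
      fix x y :: int
      have "- x - - y = - (x - y)" by simp
      then show "c (- x) = c (- y) \<longleftrightarrow> k dvd x - y" by (simp only: eq_iff dvd_minus_iff)
    qed (use k_ge_3 k_odd in simp_all)
    have "u = c (- (- t - 1))" "w = c (- (- t - 1 + 1))" using 2 by (simp_all add: add.commute)
    then show ?thesis
      using reflected.colouring_avoiding_succ[of "- t - 1"] cycle_edges_reflect[of c] by metis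
  qed
qed

end

section \<open>Isomorphisms and the Petersen graph\<close>

lemma graph_iso_if_inverse:
  assumes bij: "bij_betw \<psi> V' V"
    and edges: "\<And>X Y. X \<in> V' \<Longrightarrow> Y \<in> V' \<Longrightarrow> {\<psi> X, \<psi> Y} \<in> E \<longleftrightarrow> {X, Y} \<in> E'"
  shows "graph_iso V E V' E'"
  unfolding graph_iso_def
proof (intro exI[of _ "inv_into V' \<psi>"] conjI ballI)
  show "bij_betw (inv_into V' \<psi>) V V'" using bij by (rule bij_betw_inv_into)
  fix u v assume "u \<in> V" "v \<in> V"
  then have "inv_into V' \<psi> u \<in> V'" "inv_into V' \<psi> v \<in> V'"
    and "\<psi> (inv_into V' \<psi> u) = u" "\<psi> (inv_into V' \<psi> v) = v"
    using bij by (auto simp: bij_betw_def inv_into_into f_inv_into_f)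
  then show "{u, v} \<in> E \<longleftrightarrow> {inv_into V' \<psi> u, inv_into V' \<psi> v} \<in> E'"
    using edges by metis
qed

lemma graph_iso_remove_edge:
  assumes bij: "bij_betw \<psi> V' V"
    and edges: "\<And>X Y. X \<in> V' \<Longrightarrow> Y \<in> V' \<Longrightarrow> {\<psi> X, \<psi> Y} \<in> E \<longleftrightarrow> {X, Y} \<in> E'"
    and "X0 \<in> V'" "Y0 \<in> V'"
  shows "graph_iso V (E - {{\<psi> X0, \<psi> Y0}}) V' (E' - {{X0, Y0}})"
proof (rule graph_iso_if_inverse[OF bij])
  fix X Y assume "X \<in> V'" "Y \<in> V'"
  moreover have "inj_on \<psi> V'" using bij by (simp add: bij_betw_def)
  ultimately have "{\<psi> X, \<psi> Y} = {\<psi> X0, \<psi> Y0} \<longleftrightarrow> {X, Y} = {X0, Y0}"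
    using assms(3,4) unfolding doubleton_eq_iff inj_on_def by blast
  then show "{\<psi> X, \<psi> Y} \<in> E - {{\<psi> X0, \<psi> Y0}} \<longleftrightarrow> {X, Y} \<in> E' - {{X0, Y0}}"
    using edges \<open>X \<in> V'\<close> \<open>Y \<in> V'\<close> by blast
qed

lemma nat_less_5_cases: "(X::nat) < 5 \<Longrightarrow> X = 0 \<or> X = 1 \<or> X = 2 \<or> X = 3 \<or> X = 4"
  by arith

lemma petersen_E_explicit:
  "petersen_E = {{0,1},{1,2},{2,3},{3,4},{4,0},{0,5},{1,6},{2,7},{3,8},{4,9},
    {5,7},{6,8},{7,9},{8,5},{9,6}}"
proof -
  have five: "{f i | i. i < (5::nat)} = {f 0, f 1, f 2, f 3, f 4}" for f :: "nat \<Rightarrow> nat set"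
    using nat_less_5_cases by fastforce
  show ?thesis
    unfolding petersen_E_def five by (simp add: insert_commute numeral_2_eq_2)
qed

lemma petersen_V_cases:
  assumes "X \<in> petersen_V"
  obtains "X < 5" | X' where "X' < 5" "X = X' + 5"
proof (cases "X < 5")
  case False
  then have "X - 5 < 5" "X = (X - 5) + 5" using assms by (auto simp: petersen_V_def)
  then show ?thesis using that(2) by blast
qed

lemma petersen_outer_iff:
  assumes "X < 5" "Y < 5"
  shows "{X, Y} \<in> petersen_E \<longleftrightarrow> ((int Y - int X) mod 5 = 1 \<or> (int Y - int X) mod 5 = 4)"
  using nat_less_5_cases[OF assms(1)] nat_less_5_cases[OF assms(2)]
  by (elim disjE) (simp_all add: petersen_E_explicit doubleton_eq_iff)

lemma petersen_spoke_iff: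
  assumes "X < 5" "Y < 5"
  shows "{X, Y + 5} \<in> petersen_E \<longleftrightarrow> X = Y"
  using nat_less_5_cases[OF assms(1)] nat_less_5_cases[OF assms(2)]
  by (elim disjE) (simp_all add: petersen_E_explicit doubleton_eq_iff)

lemma petersen_inner_iff:
  assumes "X < 5" "Y < 5"
  shows "{X + 5, Y + 5} \<in> petersen_E \<longleftrightarrow> ((int Y - int X) mod 5 = 2 \<or> (int Y - int X) mod 5 = 3)"
  using nat_less_5_cases[OF assms(1)] nat_less_5_cases[OF assms(2)]
  by (elim disjE) (simp_all add: petersen_E_explicit doubleton_eq_iff)

lemma mod_5_adjacent_iff:
  fixes u v :: int
  shows "5 dvd v - u - 1 \<or> 5 dvd u - v - 1 \<longleftrightarrow> (v - u) mod 5 = 1 \<or> (v - u) mod 5 = 4"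
  by presburger

lemma mod_5_adjacent_multiple_iff:
  fixes u v z d :: int
  assumes "5 dvd v - u - d * z" and "d = 2 \<or> d = 3"
  shows "5 dvd v - u - 1 \<or> 5 dvd u - v - 1 \<longleftrightarrow> z mod 5 = 2 \<or> z mod 5 = 3"
proof (cases "d = 2")
  case True
  then have "5 dvd v - u - 2 * z" using assms(1) by simp
  then show ?thesis by presburger
next
  case False
  then have "5 dvd v - u - 3 * z" using assms by simp
  then show ?thesis by presburger
qed

section \<open>Permutation graphs in cyclic coordinates\<close>

lemma eq_if_dvd_diff_abs_less:
  fixes k x y :: int
  assumes "k dvd x - y" "\<bar>x - y\<bar> < k"
  shows "x = y"
proof (rule ccontr)
  assume "x \<noteq> y"
  then have "\<bar>k\<bar> \<le> \<bar>x - y\<bar>" using assms(1) dvd_imp_le_int by simp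
  then show False using assms(2) by simp
qed

locale odd_permutation_graph =
  A: odd_cycle k a + B: odd_cycle k b
  for k :: int and a b :: "int \<Rightarrow> 'a" +
  fixes V :: "'a set" and E :: "'a set set" and s :: "int \<Rightarrow> int"
  assumes a_neq_b: "a x \<noteq> b y"
    and s_cong_iff: "k dvd s x - s y \<longleftrightarrow> k dvd x - y"
    and s_surj: "\<exists>x. k dvd s x - y"
    and V_eq: "V = range a \<union> range b"
    and E_eq: "E = cycle_edges a \<union> cycle_edges b \<union> range (\<lambda>x. {a x, b (s x)})"
begin

lemma b_s_eq_iff: "b (s x) = b (s y) \<longleftrightarrow> k dvd x - y"
  by (simp add: B.eq_iff s_cong_iff)

lemma spoke_in_E: "{a x, b (s x)} \<in> E"
  by (simp add: E_eq)

lemma range_a_b_disjoint: "range a \<inter> range b = {}"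
  using a_neq_b by blast

(* a i, a (i + 1), b (s (i + 1)), b (s i) is a 4-cycle through two matching edges. *)
definition square_at :: "int \<Rightarrow> bool" where
  "square_at i \<longleftrightarrow> {b (s i), b (s (i + 1))} \<in> cycle_edges b"

lemma free_colour_spoke:
  "free_colour (a i) (a (i + 1)) (a x) = free_colour (b (s i)) (b (s (i + 1))) (b (s x))"
  by (simp add: free_colour_def A.eq_iff b_s_eq_iff)

(* The free colour is 0 at a i and b (s i), 1 at a (i + 1) and b (s (i + 1)), and 2 elsewhere,
   so it agrees at the two ends of each matching edge. *)
lemma colourable_if_square:
  assumes "square_at i"
  shows "three_edge_colourable E"
proof -
  define m where "m v = (if v \<in> range a then free_colour (a i) (a (i + 1)) v
    else free_colour (b (s i)) (b (s (i + 1))) v)" for v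
  have "{a i, a (i + 1)} \<in> cycle_edges a" by (simp add: cycle_edges_def)
  then obtain col_a
    where "avoiding_3_colouring (cycle_edges a) col_a (free_colour (a i) (a (i + 1)))"
    using A.colouring_avoiding by blast
  moreover obtain col_b
    where "avoiding_3_colouring (cycle_edges b) col_b (free_colour (b (s i)) (b (s (i + 1))))"
    using assms B.colouring_avoiding unfolding square_at_def by blast
  ultimately have "avoiding_3_colouring (cycle_edges a \<union> cycle_edges b)
      (\<lambda>e. if e \<in> cycle_edges a then col_a e else col_b e) m"
    unfolding m_def
    by (rule avoiding_3_colouring_Un)
      (use cycle_edges_subset_range range_a_b_disjoint in blast)+
  then have "three_edge_colourable (cycle_edges a \<union> cycle_edges b \<union> range (\<lambda>x. {a x, b (s x)}))"
  proof (rule three_edge_colourable_add_matching)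
    show "m v < 3" for v by (simp add: m_def free_colour_def)
    show "e \<inter> e' = {}" if "e \<in> range (\<lambda>x. {a x, b (s x)})" "e' \<in> range (\<lambda>x. {a x, b (s x)})"
      "e \<noteq> e'" for e e'
      using that by (auto simp: A.eq_iff b_s_eq_iff a_neq_b a_neq_b[symmetric] dvd_diff_commute)
    show "m u = m v" if e: "e \<in> range (\<lambda>x. {a x, b (s x)})" and "u \<in> e" "v \<in> e" for e u v
    proof -
      obtain x where "e = {a x, b (s x)}" using e by blast
      moreover have "b (s x) \<notin> range a" using a_neq_b by (metis rangeE)
      then have "m (a x) = m (b (s x))" using free_colour_spoke by (simp add: m_def)
      ultimately show ?thesis using \<open>u \<in> e\<close> \<open>v \<in> e\<close> by auto
    qed
    show "{} \<notin> range (\<lambda>x. {a x, b (s x)})" by blast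
  qed
  then show ?thesis by (simp add: E_eq)
qed

lemma square_at_iff: "square_at i \<longleftrightarrow> k dvd s (i + 1) - s i - 1 \<or> k dvd s i - s (i + 1) - 1"
  by (simp add: square_at_def B.doubleton_in_cycle_edges_iff)

lemma s_succ_not_cong: "\<not> k dvd s (i + 1) - s i"
  using A.k_ge_3 by (simp add: s_cong_iff zdvd_not_zless)

lemma a_edge_in_E_minus_spoke: "{a x, a (x + 1)} \<in> E - {{a r, b (s r)}}"
  using a_neq_b by (auto simp: E_eq cycle_edges_def doubleton_eq_iff)

lemma b_edge_in_E_minus_spoke: "{b y, b (y + 1)} \<in> E - {{a r, b (s r)}}"
  using a_neq_b[symmetric] by (auto simp: E_eq cycle_edges_def doubleton_eq_iff)

lemma spoke_in_E_minus_other_spoke: "\<not> k dvd x - r \<Longrightarrow> {a x, b (s x)} \<in> E - {{a r, b (s r)}}"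
  using a_neq_b by (auto simp: spoke_in_E doubleton_eq_iff A.eq_iff)

(* The closed walk a i, ..., a (i + p), b (s (i + p)), b (s (i + p) + \<delta>), ...,
   b (s (i + p) + \<delta> * q); this last vertex is b (s i), from which the walk returns to a i. *)
definition two_spoke_walk :: "int \<Rightarrow> int \<Rightarrow> int \<Rightarrow> nat \<Rightarrow> 'a" where
  "two_spoke_walk i p \<delta> l =
     (if int l \<le> p then a (i + int l) else b (s (i + p) + \<delta> * (int l - p - 1)))"

lemma two_spoke_walk_inj:
  assumes "p < k" "0 \<le> q" "q < k" "\<delta> = 1 \<or> \<delta> = -1"
  shows "inj_on (two_spoke_walk i p \<delta>) {0..<nat (p + q + 2)}"
proof
  fix l l' assume l: "l \<in> {0..<nat (p + q + 2)}" and l': "l' \<in> {0..<nat (p + q + 2)}"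
    and eq: "two_spoke_walk i p \<delta> l = two_spoke_walk i p \<delta> l'"
  consider "int l \<le> p" "int l' \<le> p" | "p < int l" "p < int l'" | "int l \<le> p \<longleftrightarrow> p < int l'"
    by linarith
  then have "int l = int l'"
  proof cases
    case 1
    then have "k dvd int l - int l'" using eq by (simp add: two_spoke_walk_def A.eq_iff)
    then show ?thesis using 1 assms(1) by (intro eq_if_dvd_diff_abs_less) auto
  next
    case 2
    then have "k dvd \<delta> * (int l - p - 1) - \<delta> * (int l' - p - 1)"
      using eq by (simp add: two_spoke_walk_def B.eq_iff)
    moreover have "\<delta> * (int l - p - 1) - \<delta> * (int l' - p - 1) = \<delta> * (int l - int l')"
      by (simp add: algebra_simps)
    ultimately have "k dvd int l - int l'" using assms(4) by (auto simp: dvd_diff_commute)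
    then show ?thesis using 2 l l' assms(2,3) by (intro eq_if_dvd_diff_abs_less) auto
  next
    case 3
    then show ?thesis using eq a_neq_b by (auto simp: two_spoke_walk_def dest: sym)
  qed
  then show "l = l'" by simp
qed

lemma two_spoke_walk_edge:
  assumes "1 \<le> p" "0 \<le> q" "\<delta> = 1 \<or> \<delta> = -1" and closes: "k dvd s (i + p) + \<delta> * q - s i"
    and "\<not> k dvd i - r" "\<not> k dvd i + p - r" and "l < nat (p + q + 2)"
  shows "{two_spoke_walk i p \<delta> l, two_spoke_walk i p \<delta> ((l + 1) mod nat (p + q + 2))}
    \<in> E - {{a r, b (s r)}}"
proof -
  let ?w = "two_spoke_walk i p \<delta>"
  consider "int l < p" | "int l = p" | "p < int l" "l + 1 < nat (p + q + 2)"
    | "l + 1 = nat (p + q + 2)"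
    using assms(7) by linarith
  then show ?thesis
  proof cases
    case 1
    then have "{?w l, ?w ((l + 1) mod nat (p + q + 2))} = {a (i + int l), a (i + int l + 1)}"
      using assms(2,7) by (simp add: two_spoke_walk_def algebra_simps)
    then show ?thesis using a_edge_in_E_minus_spoke by simp
  next
    case 2
    then have "{?w l, ?w ((l + 1) mod nat (p + q + 2))} = {a (i + p), b (s (i + p))}"
      using assms(2,7) by (simp add: two_spoke_walk_def)
    then show ?thesis
      using spoke_in_E_minus_other_spoke assms(6) by (simp add: diff_diff_eq[symmetric])
  next
    case 3
    define y where "y = s (i + p) + \<delta> * (int l - p - 1)"
    have "{?w l, ?w ((l + 1) mod nat (p + q + 2))} = {b y, b (y + \<delta>)}"
      using 3 by (simp add: two_spoke_walk_def y_def algebra_simps)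
    moreover have "{b y, b (y + \<delta>)} \<in> E - {{a r, b (s r)}}"
      using assms(3) b_edge_in_E_minus_spoke[of y] b_edge_in_E_minus_spoke[of "y - 1"]
      by (auto simp: insert_commute)
    ultimately show ?thesis by simp
  next
    case 4
    then have "int l - p - 1 = q" "\<not> int l \<le> p" using assms(1,2) by auto
    moreover have "b (s (i + p) + \<delta> * q) = b (s i)" using closes by (simp add: B.eq_iff)
    ultimately have "{?w l, ?w ((l + 1) mod nat (p + q + 2))} = {b (s i), a i}"
      using 4 assms(1) by (simp add: two_spoke_walk_def)
    then show ?thesis using spoke_in_E_minus_other_spoke assms(5) by (simp add: insert_commute)
  qed
qed

lemma has_cycle_two_spokes:
  assumes "E - {{a r, b (s r)}} \<subseteq> G"
    and "1 \<le> p" "p < k" "0 \<le> q" "q < k" "\<delta> = 1 \<or> \<delta> = -1"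
    and "k dvd s (i + p) + \<delta> * q - s i" and "\<not> k dvd i - r" "\<not> k dvd i + p - r"
  shows "has_cycle V G (nat (p + q + 2))"
  unfolding has_cycle_def
proof (intro conjI exI[of _ "two_spoke_walk i p \<delta>"] allI impI)
  show "3 \<le> nat (p + q + 2)" using assms(2,4) by simp
  show "inj_on (two_spoke_walk i p \<delta>) {0..<nat (p + q + 2)}"
    using assms(3-6) by (rule two_spoke_walk_inj)
  show "two_spoke_walk i p \<delta> ` {0..<nat (p + q + 2)} \<subseteq> V"
    by (auto simp: two_spoke_walk_def V_eq)
  fix l assume "l < nat (p + q + 2)"
  then show "{two_spoke_walk i p \<delta> l, two_spoke_walk i p \<delta> ((l + 1) mod nat (p + q + 2))} \<in> G"
    using two_spoke_walk_edge assms by blast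
qed

(* a i, a (i + 1) together with either arc of b between b (s (i + 1)) and b (s i) is a cycle;
   the one of odd length has length at least k. *)
lemma s_step_residue_bounds:
  assumes sub: "E - {{a r, b (s r)}} \<subseteq> G"
    and short: "\<And>m. odd m \<Longrightarrow> has_cycle V G m \<Longrightarrow> k \<le> int m"
    and "\<not> k dvd i - r" "\<not> k dvd i + 1 - r"
    and d: "0 < d" "d < k" "k dvd s (i + 1) - s i - d"
  shows "even d \<Longrightarrow> k - 3 \<le> d" and "odd d \<Longrightarrow> d \<le> 3"
proof -
  assume "even d"
  have "k dvd s (i + 1) + (- 1) * d - s i" using d(3) by (simp add: algebra_simps)
  then have "has_cycle V G (nat (1 + d + 2))"
    using has_cycle_two_spokes[OF sub, of 1 d "-1" i] d assms(3,4) A.k_ge_3 by simp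
  then show "k - 3 \<le> d" using short[of "nat (1 + d + 2)"] \<open>even d\<close> d by (simp add: even_nat_iff)
next
  assume "odd d"
  have "s (i + 1) + 1 * (k - d) - s i = (s (i + 1) - s i - d) + 1 * k" by simp
  then have "k dvd s (i + 1) + 1 * (k - d) - s i"
    using d(3) by (simp only: dvd_add_times_triv_right_iff)
  then have "has_cycle V G (nat (1 + (k - d) + 2))"
    using has_cycle_two_spokes[OF sub, of 1 "k - d" 1 i] d assms(3,4) A.k_ge_3 by simp
  then show "d \<le> 3" using short[of "nat (1 + (k - d) + 2)"] \<open>odd d\<close> d A.k_odd
    by (simp add: even_nat_iff)
qed

lemma s_step_cong_pm_3:
  assumes sub: "E - {{a r, b (s r)}} \<subseteq> G"
    and short: "\<And>m. odd m \<Longrightarrow> has_cycle V G m \<Longrightarrow> k \<le> int m"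
    and "\<not> k dvd i - r" "\<not> k dvd i + 1 - r" and "\<not> square_at i"
  shows "\<exists>\<epsilon>. (\<epsilon> = 1 \<or> \<epsilon> = -1) \<and> k dvd s (i + 1) - s i - 3 * \<epsilon>"
proof -
  define d where "d = (s (i + 1) - s i) mod k"
  have d_range: "0 \<le> d" "d < k" using A.k_ge_3 by (simp_all add: d_def)
  have d_cong: "k dvd s (i + 1) - s i - d" by (simp add: d_def mod_eq_dvd_iff[symmetric])
  have "d \<noteq> 0" using d_cong s_succ_not_cong by auto
  have "d \<noteq> 1" using d_cong assms(5) by (auto simp: square_at_iff)
  have "d \<noteq> k - 1"
  proof
    assume "d = k - 1"
    then have "s i - s (i + 1) - 1 = - (s (i + 1) - s i - d) + (- 1) * k" by simp
    moreover have "k dvd - (s (i + 1) - s i - d) + (- 1) * k"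
      using d_cong by (simp only: dvd_minus_iff dvd_add_times_triv_right_iff)
    ultimately show False using assms(5) by (simp only: square_at_iff) simp
  qed
  note bounds = s_step_residue_bounds[OF sub short assms(3,4) _ d_range(2) d_cong]
  show ?thesis
  proof (cases "even d")
    case True
    then have "d \<noteq> k - 2" using A.k_odd by auto
    then have "d = k - 3" using bounds(1) True \<open>d \<noteq> 0\<close> \<open>d \<noteq> k - 1\<close> d_range by linarith
    then have "k dvd (s (i + 1) - s i - d) + k" using d_cong by (simp only: dvd_add_triv_right_iff)
    then show ?thesis using \<open>d = k - 3\<close> by (intro exI[of _ "-1"]) (simp add: algebra_simps)
  next
    case False
    then have "d \<noteq> 2" by auto
    then have "d = 3" using bounds(2) False \<open>d \<noteq> 0\<close> \<open>d \<noteq> 1\<close> d_range by linarith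
    then show ?thesis using d_cong by (intro exI[of _ 1]) simp
  qed
qed

(* The steps at r + 1 and r + 2 avoid the deleted spoke r. Two steps of \<plusminus>3 either cancel,
   contradicting injectivity of s, or add up to \<plusminus>6 and close an odd cycle of length k - 2. *)
lemma square_if_k_ge_7:
  assumes sub: "E - {{a r, b (s r)}} \<subseteq> G"
    and short: "\<And>m. odd m \<Longrightarrow> has_cycle V G m \<Longrightarrow> k \<le> int m"
    and "7 \<le> k"
  shows "\<exists>i. square_at i"
proof (rule ccontr)
  assume no_square: "\<nexists>i. square_at i"
  have small: "\<not> k dvd j" if "0 < j" "j \<le> 3" for j using that assms(3) by (simp add: zdvd_not_zless)
  obtain \<epsilon>1 where \<epsilon>1: "\<epsilon>1 = 1 \<or> \<epsilon>1 = -1" "k dvd s (r + 2) - s (r + 1) - 3 * \<epsilon>1"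
    using s_step_cong_pm_3[OF sub short, of "r + 1"] no_square small[of 1] small[of 2]
    by (auto simp: add.assoc)
  obtain \<epsilon>2 where \<epsilon>2: "\<epsilon>2 = 1 \<or> \<epsilon>2 = -1" "k dvd s (r + 3) - s (r + 2) - 3 * \<epsilon>2"
    using s_step_cong_pm_3[OF sub short, of "r + 2"] no_square small[of 2] small[of 3]
    by (auto simp: add.assoc)
  have sum: "k dvd s (r + 3) - s (r + 1) - 3 * (\<epsilon>1 + \<epsilon>2)"
  proof -
    have "k dvd (s (r + 3) - s (r + 2) - 3 * \<epsilon>2) + (s (r + 2) - s (r + 1) - 3 * \<epsilon>1)"
      using \<epsilon>1(2) \<epsilon>2(2) by (rule dvd_add[rotated])
    then show ?thesis by (simp add: algebra_simps)
  qed
  show False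
  proof (cases "\<epsilon>1 = \<epsilon>2")
    case True
    have "s (r + 1 + 2) + \<epsilon>1 * (k - 6) - s (r + 1)
        = (s (r + 3) - s (r + 1) - 3 * (\<epsilon>1 + \<epsilon>2)) + \<epsilon>1 * k"
      using True by (simp add: algebra_simps)
    then have "k dvd s (r + 1 + 2) + \<epsilon>1 * (k - 6) - s (r + 1)"
      using sum by (simp only: dvd_add_times_triv_right_iff)
    then have "has_cycle V G (nat (2 + (k - 6) + 2))"
      using has_cycle_two_spokes[OF sub, of 2 "k - 6" \<epsilon>1 "r + 1"] \<epsilon>1(1) small[of 1] small[of 3]
        assms(3) by simp
    then show False
      using short[of "nat (2 + (k - 6) + 2)"] assms(3) A.k_odd by (simp add: even_nat_iff)
  next
    case False
    then have "k dvd s (r + 3) - s (r + 1)" using sum \<epsilon>1(1) \<epsilon>2(1) by auto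
    then show False using small[of 2] by (simp add: s_cong_iff)
  qed
qed

lemma square_if_k_eq_3: "k = 3 \<Longrightarrow> square_at i"
  using s_succ_not_cong[of i] unfolding square_at_iff by presburger

lemma s_arith_progression:
  assumes "\<And>x. k dvd s (x + 1) - s x - d"
  shows "k dvd s y - s x - d * (y - x)"
proof (induction y rule: int_induct[of _ x])
  case base
  then show ?case by simp
next
  case (step1 y)
  have "k dvd (s (y + 1) - s y - d) + (s y - s x - d * (y - x))"
    using assms step1.IH by (rule dvd_add)
  then show ?case by (simp add: algebra_simps)
next
  case (step2 y)
  have "k dvd (s y - s x - d * (y - x)) - (s (y - 1 + 1) - s (y - 1) - d)"
    using step2.IH assms by (rule dvd_diff)
  then show ?case by (simp add: algebra_simps)
qed

(* Every step is 2 or 3 modulo 5, and two different consecutive steps would add up to 0. *)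
lemma s_step_const_if_k_eq_5:
  assumes "k = 5" and no_square: "\<nexists>i. square_at i"
  obtains d where "d = 2 \<or> d = 3" "\<And>x. k dvd s (x + 1) - s x - d"
proof -
  define D where "D x = (s (x + 1) - s x) mod 5" for x
  have D_cong: "5 dvd s (x + 1) - s x - D x" for x by (simp add: D_def mod_eq_dvd_iff[symmetric])
  have D_values: "D x = 2 \<or> D x = 3" for x
  proof -
    have "\<not> square_at x" using no_square by blast
    then show ?thesis
      using s_succ_not_cong[of x] unfolding square_at_iff D_def assms(1) by presburger
  qed
  have D_succ: "D (x + 1) = D x" for x
  proof (rule ccontr)
    assume "D (x + 1) \<noteq> D x"
    then have "D x + D (x + 1) = 5" using D_values[of x] D_values[of "x + 1"] by auto
    then have "(s (x + 1) - s x - D x) + (s (x + 1 + 1) - s (x + 1) - D (x + 1))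
        = (s (x + 1 + 1) - s x) + (- 1) * 5" by linarith
    moreover have "5 dvd (s (x + 1) - s x - D x) + (s (x + 1 + 1) - s (x + 1) - D (x + 1))"
      using D_cong[of x] D_cong[of "x + 1"] by (rule dvd_add)
    ultimately have "5 dvd (s (x + 1 + 1) - s x) + (- 1) * 5" by metis
    then have "5 dvd s (x + 1 + 1) - s x" by (simp only: dvd_add_times_triv_right_iff)
    then show False using assms(1) s_cong_iff[of "x + 1 + 1" x] by simp
  qed
  have D_const: "D x = D 0" for x
    by (induction x rule: int_induct[of _ 0]) (simp_all add: D_succ, metis D_succ diff_add_cancel)
  show ?thesis
  proof (rule that)
    show "D 0 = 2 \<or> D 0 = 3" by (rule D_values)
    show "k dvd s (x + 1) - s x - D 0" for x using D_cong[of x] D_const[of x] assms(1) by simp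
  qed
qed

lemma a_pair_in_E_iff: "{a x, a y} \<in> E \<longleftrightarrow> k dvd y - x - 1 \<or> k dvd x - y - 1"
proof -
  have "{a x, a y} \<notin> cycle_edges b" using cycle_edges_subset_range a_neq_b by blast
  moreover have "{a x, a y} \<notin> range (\<lambda>z. {a z, b (s z)})"
    using a_neq_b by (auto simp: doubleton_eq_iff)
  ultimately show ?thesis by (auto simp: E_eq A.doubleton_in_cycle_edges_iff)
qed

lemma b_pair_in_E_iff: "{b x, b y} \<in> E \<longleftrightarrow> k dvd y - x - 1 \<or> k dvd x - y - 1"
proof -
  have "{b x, b y} \<notin> cycle_edges a" using cycle_edges_subset_range a_neq_b[symmetric] by blast
  moreover have "{b x, b y} \<notin> range (\<lambda>z. {a z, b (s z)})"
    using a_neq_b[symmetric] by (auto simp: doubleton_eq_iff)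
  ultimately show ?thesis by (auto simp: E_eq B.doubleton_in_cycle_edges_iff)
qed

lemma a_b_pair_in_E_iff: "{a x, b (s y)} \<in> E \<longleftrightarrow> k dvd x - y"
proof
  assume "{a x, b (s y)} \<in> E"
  moreover have "b (s y) \<notin> range a" "a x \<notin> range b" using a_neq_b a_neq_b[symmetric] by auto
  then have "{a x, b (s y)} \<notin> cycle_edges a \<union> cycle_edges b"
    using cycle_edges_subset_range cycle_edges_subset_range by blast
  ultimately obtain z where "{a x, b (s y)} = {a z, b (s z)}" unfolding E_eq by blast
  then have "a x = a z" "b (s y) = b (s z)" using a_neq_b by (auto simp: doubleton_eq_iff)
  then have "k dvd x - z" "k dvd y - z" by (simp_all add: A.eq_iff b_s_eq_iff)
  then have "k dvd (x - z) - (y - z)" by (rule dvd_diff)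
  then show "k dvd x - y" by simp
next
  assume "k dvd x - y"
  then have "b (s y) = b (s x)" by (simp add: b_s_eq_iff dvd_diff_commute)
  then show "{a x, b (s y)} \<in> E" using spoke_in_E by simp
qed

lemma V_eq_residues: "V = a ` {0..<k} \<union> (\<lambda>x. b (s x)) ` {0..<k}"
proof -
  have "a y \<in> a ` {0..<k}" for y
  proof
    show "a y = a (y mod k)" by (simp add: A.eq_iff mod_eq_dvd_iff[symmetric])
    show "y mod k \<in> {0..<k}" using A.k_ge_3 by simp
  qed
  moreover have "b y \<in> (\<lambda>x. b (s x)) ` {0..<k}" for y
  proof -
    obtain x where "k dvd s x - y" using s_surj by blast
    moreover have "k dvd s (x mod k) - s x"
      using s_cong_iff[of "x mod k" x] by (simp add: mod_eq_dvd_iff[symmetric])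
    ultimately have "k dvd (s (x mod k) - s x) + (s x - y)" by (simp only: dvd_add)
    then have "k dvd y - s (x mod k)" by (simp add: dvd_diff_commute[of k y])
    then have "b y = b (s (x mod k))" by (simp only: B.eq_iff)
    moreover have "x mod k \<in> {0..<k}" using A.k_ge_3 by simp
    ultimately show ?thesis by blast
  qed
  ultimately show ?thesis unfolding V_eq by (intro equalityI) auto
qed

definition petersen_labelling :: "nat \<Rightarrow> 'a" where
  "petersen_labelling n = (if n < 5 then a (int n) else b (s (int n - 5)))"

lemma petersen_labelling_bij:
  assumes "k = 5"
  shows "bij_betw petersen_labelling petersen_V V"
  unfolding bij_betw_def
proof
  show "inj_on petersen_labelling petersen_V"
  proof
    fix m n assume "m \<in> petersen_V" "n \<in> petersen_V" "petersen_labelling m = petersen_labelling n"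
    then have "k dvd int m - int n \<and> \<bar>int m - int n\<bar> < k \<or>
        k dvd (int m - 5) - (int n - 5) \<and> \<bar>(int m - 5) - (int n - 5)\<bar> < k"
      using assms a_neq_b a_neq_b[symmetric]
      by (auto simp: petersen_labelling_def petersen_V_def A.eq_iff b_s_eq_iff split: if_splits)
    then show "m = n" using eq_if_dvd_diff_abs_less by fastforce
  qed
  show "petersen_labelling ` petersen_V = V"
  proof
    show "petersen_labelling ` petersen_V \<subseteq> V" by (auto simp: petersen_labelling_def V_eq)
    have "a x \<in> petersen_labelling ` petersen_V" if "x \<in> {0..<5}" for x
    proof
      show "a x = petersen_labelling (nat x)"
        using that by (simp add: petersen_labelling_def nat_less_iff)
      show "nat x \<in> petersen_V" using that by (simp add: petersen_V_def nat_less_iff)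
    qed
    moreover have "b (s x) \<in> petersen_labelling ` petersen_V" if "x \<in> {0..<5}" for x
    proof
      show "b (s x) = petersen_labelling (nat x + 5)"
        using that by (simp add: petersen_labelling_def)
      show "nat x + 5 \<in> petersen_V" using that by (simp add: petersen_V_def nat_less_iff)
    qed
    ultimately show "V \<subseteq> petersen_labelling ` petersen_V"
      unfolding V_eq_residues assms by blast
  qed
qed

lemma spoke_iff_petersen_spoke:
  assumes "k = 5" "X < 5" "Y < 5"
  shows "{a (int X), b (s (int Y))} \<in> E \<longleftrightarrow> {X, Y + 5} \<in> petersen_E"
proof -
  have "5 dvd int X - int Y \<longleftrightarrow> X = Y"
    using assms(2,3) eq_if_dvd_diff_abs_less[of 5 "int X" "int Y"] by auto
  then show ?thesis using assms by (simp add: a_b_pair_in_E_iff petersen_spoke_iff)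
qed

lemma petersen_labelling_edge_iff:
  assumes "k = 5" and d: "d = 2 \<or> d = 3" "\<And>x. k dvd s (x + 1) - s x - d"
    and "X \<in> petersen_V" "Y \<in> petersen_V"
  shows "{petersen_labelling X, petersen_labelling Y} \<in> E \<longleftrightarrow> {X, Y} \<in> petersen_E"
proof -
  note spoke = spoke_iff_petersen_spoke[OF assms(1)]
  from assms(4) show ?thesis
  proof (cases rule: petersen_V_cases)
    case 1
    from assms(5) show ?thesis
    proof (cases rule: petersen_V_cases)
      case 2: 1
      then show ?thesis using 1 mod_5_adjacent_iff[of "int Y" "int X"]
        by (simp add: petersen_labelling_def a_pair_in_E_iff petersen_outer_iff assms(1))
    next
      case (2 Y')
      then show ?thesis using 1 spoke[of X Y'] by (simp add: petersen_labelling_def)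
    qed
  next
    case (2 X')
    from assms(5) show ?thesis
    proof (cases rule: petersen_V_cases)
      case 1
      then show ?thesis using 2 spoke[of Y X'] by (simp add: petersen_labelling_def insert_commute)
    next
      case 3: (2 Y')
      have "5 dvd s (int Y') - s (int X') - d * (int Y' - int X')"
        using s_arith_progression[OF d(2)] assms(1) by simp
      then have "5 dvd s (int Y') - s (int X') - 1 \<or> 5 dvd s (int X') - s (int Y') - 1
          \<longleftrightarrow> ((int Y' - int X') mod 5 = 2 \<or> (int Y' - int X') mod 5 = 3)"
        using d(1) by (rule mod_5_adjacent_multiple_iff)
      then show ?thesis using 2 3
        by (simp add: petersen_labelling_def b_pair_in_E_iff petersen_inner_iff assms(1))
    qed
  qed
qed

lemma iso_petersen_if_k_eq_5:
  assumes "k = 5" and "\<nexists>i. square_at i"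
  shows "graph_iso V E petersen_V petersen_E"
    and "\<exists>e\<in>petersen_E. graph_iso V (E - {{a r, b (s r)}}) petersen_V (petersen_E - {e})"
proof -
  obtain d where d: "d = 2 \<or> d = 3" "\<And>x. k dvd s (x + 1) - s x - d"
    using s_step_const_if_k_eq_5 assms by blast
  note bij = petersen_labelling_bij[OF assms(1)]
  note edges = petersen_labelling_edge_iff[OF assms(1) d]
  show "graph_iso V E petersen_V petersen_E" using bij edges by (rule graph_iso_if_inverse)
  define R where "R = nat (r mod 5)"
  have R: "R < 5" "R \<in> petersen_V" "R + 5 \<in> petersen_V" by (auto simp: R_def petersen_V_def)
  have "a r = petersen_labelling R" "b (s r) = petersen_labelling (R + 5)"
    using assms(1)
    by (auto simp: petersen_labelling_def R_def A.eq_iff b_s_eq_iff mod_eq_dvd_iff[symmetric])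
  then have "graph_iso V (E - {{a r, b (s r)}}) petersen_V (petersen_E - {{R, R + 5}})"
    using graph_iso_remove_edge[OF bij edges R(2,3)] by simp
  moreover have "{R, R + 5} \<in> petersen_E" using R(1) by (simp add: petersen_spoke_iff)
  ultimately show "\<exists>e\<in>petersen_E. graph_iso V (E - {{a r, b (s r)}}) petersen_V (petersen_E - {e})"
    by blast
qed

lemma petersen_if_not_colourable:
  assumes G: "G = E \<or> G = E - {{a r, b (s r)}}"
    and short: "\<And>m. odd m \<Longrightarrow> has_cycle V G m \<Longrightarrow> k \<le> int m"
    and "\<not> three_edge_colourable G"
  shows "graph_iso V G petersen_V petersen_E \<or>
    (\<exists>e\<in>petersen_E. graph_iso V G petersen_V (petersen_E - {e}))"
proof -
  have sub: "E - {{a r, b (s r)}} \<subseteq> G" "G \<subseteq> E" using G by blast+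
  have no_square: "\<nexists>i. square_at i"
    using colourable_if_square three_edge_colourable_mono[OF sub(2)] assms(3) by blast
  have "k \<noteq> 3" using square_if_k_eq_3[of 0] no_square by auto
  moreover have "\<not> 7 \<le> k" using square_if_k_ge_7[OF sub(1) short] no_square by auto
  ultimately have "k = 5" using A.k_ge_3 A.k_odd by presburger
  note petersen = iso_petersen_if_k_eq_5[OF this no_square]
  from G show ?thesis
  proof
    assume "G = E"
    then show ?thesis using petersen(1) by simp
  next
    assume "G = E - {{a r, b (s r)}}"
    then show ?thesis using petersen(2) by simp
  qed
qed

end

section \<open>Cyclic coordinates of a permutation graph\<close>

lemma nat_mod_succ: "0 < n \<Longrightarrow> nat ((x + 1) mod int n) = (nat (x mod int n) + 1) mod n"
proof -
  assume "0 < n"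
  have "int ((nat (x mod int n) + 1) mod n) = (x mod int n + 1) mod int n"
    using \<open>0 < n\<close> by (simp add: zmod_int add.commute)
  also have "\<dots> = (x + 1) mod int n" by (simp add: mod_add_left_eq)
  finally show ?thesis by (metis nat_int)
qed

definition periodic_extension :: "nat \<Rightarrow> (nat \<Rightarrow> 'a) \<Rightarrow> int \<Rightarrow> 'a" where
  "periodic_extension n f x = f (nat (x mod int n))"

lemma periodic_extension_int: "i < n \<Longrightarrow> periodic_extension n f (int i) = f i"
  by (simp add: periodic_extension_def zmod_int)

lemma periodic_extension_index: "0 < n \<Longrightarrow> nat (x mod int n) < n"
  by (simp add: nat_less_iff)

lemma periodic_extension_eq_iff:
  assumes "0 < n" "inj_on f {0..<n}"
  shows "periodic_extension n f x = periodic_extension n f y \<longleftrightarrow> int n dvd x - y"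
proof -
  have "periodic_extension n f x = periodic_extension n f y \<longleftrightarrow> nat (x mod int n) = nat (y mod int n)"
    unfolding periodic_extension_def
    using inj_on_eq_iff[OF assms(2)] periodic_extension_index[OF assms(1)] by simp
  also have "\<dots> \<longleftrightarrow> int n dvd x - y"
    using assms(1) by (simp add: mod_eq_dvd_iff[symmetric] eq_nat_nat_iff)
  finally show ?thesis .
qed

lemma range_periodic_extension:
  assumes "0 < n"
  shows "range (periodic_extension n f) = f ` {0..<n}"
proof
  show "range (periodic_extension n f) \<subseteq> f ` {0..<n}"
    using periodic_extension_index[OF assms] by (auto simp: periodic_extension_def)
  show "f ` {0..<n} \<subseteq> range (periodic_extension n f)"
  proof
    fix w assume "w \<in> f ` {0..<n}"
    then obtain i where "i < n" "w = f i" by auto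
    then have "w = periodic_extension n f (int i)" by (simp add: periodic_extension_int)
    then show "w \<in> range (periodic_extension n f)" by simp
  qed
qed

lemma cycle_edges_periodic_extension:
  assumes "0 < n"
  shows "cycle_edges (periodic_extension n f) = {{f i, f ((i + 1) mod n)} | i. i < n}"
proof
  show "cycle_edges (periodic_extension n f) \<subseteq> {{f i, f ((i + 1) mod n)} | i. i < n}"
  proof
    fix e assume "e \<in> cycle_edges (periodic_extension n f)"
    then obtain x where "e = {periodic_extension n f x, periodic_extension n f (x + 1)}"
      by (auto simp: cycle_edges_def)
    then have "e = {f (nat (x mod int n)), f ((nat (x mod int n) + 1) mod n)}"
      using assms by (simp add: periodic_extension_def nat_mod_succ)
    then show "e \<in> {{f i, f ((i + 1) mod n)} | i. i < n}"
      using periodic_extension_index[OF assms] by blast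
  qed
  show "{{f i, f ((i + 1) mod n)} | i. i < n} \<subseteq> cycle_edges (periodic_extension n f)"
  proof
    fix e assume "e \<in> {{f i, f ((i + 1) mod n)} | i. i < n}"
    then obtain i where "i < n" "e = {f i, f ((i + 1) mod n)}" by blast
    then have "e = {periodic_extension n f (int i), periodic_extension n f (int i + 1)}"
      using assms by (simp add: periodic_extension_def nat_mod_succ zmod_int)
    then show "e \<in> cycle_edges (periodic_extension n f)" by (simp add: cycle_edges_def)
  qed
qed

lemma cycle_graph_parametrisation:
  assumes "cycle_graph W F n"
  obtains c :: "int \<Rightarrow> 'a" where "\<And>x y. c x = c y \<longleftrightarrow> int n dvd x - y"
    and "range c = W" and "F = cycle_edges c"
proof -
  from assms obtain f where n: "0 < n" and f: "bij_betw f {0..<n} W"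
    and F: "F = {{f i, f ((i + 1) mod n)} | i. i < n}" unfolding cycle_graph_def by auto
  show ?thesis
  proof
    show "periodic_extension n f x = periodic_extension n f y \<longleftrightarrow> int n dvd x - y" for x y
      using n f by (simp add: periodic_extension_eq_iff bij_betw_def)
    show "range (periodic_extension n f) = W"
      using n f by (simp add: range_periodic_extension bij_betw_def)
    show "F = cycle_edges (periodic_extension n f)"
      using n by (simp add: F cycle_edges_periodic_extension)
  qed
qed

locale crossing_perfect_matching =
  fixes V :: "'a set" and M :: "'a set set" and a b :: "int \<Rightarrow> 'a"
  assumes match: "v \<in> V \<Longrightarrow> \<exists>!e. e \<in> M \<and> v \<in> e"
    and V_eq: "V = range a \<union> range b" and a_neq_b: "a x \<noteq> b y"
    and crossing: "e \<in> M \<Longrightarrow> \<exists>x y. e = {a x, b y}"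
begin

lemma crossing_edge_eq_iff: "{a x, b y} = {a x', b y'} \<longleftrightarrow> a x = a x' \<and> b y = b y'"
  using a_neq_b a_neq_b[symmetric] by (auto simp: doubleton_eq_iff)

lemma matching_edge_unique:
  assumes "e \<in> M" "e' \<in> M" "v \<in> e" "v \<in> e'"
  shows "e = e'"
proof -
  obtain x y where "e = {a x, b y}" using crossing[OF assms(1)] by blast
  then have "v \<in> V" using assms(3) V_eq by auto
  then show ?thesis using match[OF \<open>v \<in> V\<close>] assms by blast
qed

lemma partner_exists: "\<exists>y. {a x, b y} \<in> M"
proof -
  have "a x \<in> V" using V_eq by simp
  then obtain e where e: "e \<in> M" "a x \<in> e" using match by blast
  then obtain x' y where "e = {a x', b y}" using crossing by blast
  then have "e = {a x, b y}" using e(2) a_neq_b by auto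
  then show ?thesis using e(1) by blast
qed

definition partner :: "int \<Rightarrow> int" where
  "partner x = (SOME y. {a x, b y} \<in> M)"

lemma partner_edge: "{a x, b (partner x)} \<in> M"
  unfolding partner_def using partner_exists by (rule someI_ex)

lemma partner_edge_unique: "e \<in> M \<Longrightarrow> a x \<in> e \<Longrightarrow> e = {a x, b (partner x)}"
  using matching_edge_unique[OF _ partner_edge] by blast

lemma b_partner_eq_iff: "b (partner x) = b (partner y) \<longleftrightarrow> a x = a y"
proof
  assume "b (partner x) = b (partner y)"
  then have "{a x, b (partner x)} = {a y, b (partner y)}"
    using matching_edge_unique[OF partner_edge[of x] partner_edge[of y], of "b (partner x)"] by simp
  then show "a x = a y" using crossing_edge_eq_iff by blast
next
  assume "a x = a y"
  then show "b (partner x) = b (partner y)"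
    using partner_edge_unique[OF partner_edge, of x y] crossing_edge_eq_iff by auto
qed

lemma b_partner_surj: "\<exists>x. b (partner x) = b y"
proof -
  have "b y \<in> V" using V_eq by simp
  then obtain e where e: "e \<in> M" "b y \<in> e" using match by blast
  then obtain x y' where e_eq: "e = {a x, b y'}" using crossing by blast
  then have "b y = b y'" using e(2) a_neq_b[symmetric] by auto
  moreover have "e = {a x, b (partner x)}" using partner_edge_unique e(1) e_eq by simp
  ultimately show ?thesis using e_eq crossing_edge_eq_iff by metis
qed

lemma matching_eq: "M = range (\<lambda>x. {a x, b (partner x)})"
proof
  show "M \<subseteq> range (\<lambda>x. {a x, b (partner x)})"
  proof
    fix e assume "e \<in> M"
    then obtain x y where "e = {a x, b y}" using crossing by blast
    then have "e = {a x, b (partner x)}" using partner_edge_unique \<open>e \<in> M\<close> by simp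
    then show "e \<in> range (\<lambda>x. {a x, b (partner x)})" by blast
  qed
  show "range (\<lambda>x. {a x, b (partner x)}) \<subseteq> M" using partner_edge by blast
qed

end

lemma edge_between_chordless_cycles:
  assumes "simple_graph V E" "V = VA \<union> VB" "chordless_in E VA EA" "chordless_in E VB EB"
    and "e \<in> E" "e \<notin> EA" "e \<notin> EB"
  shows "\<exists>u\<in>VA. \<exists>v\<in>VB. e = {u, v}"
proof -
  obtain u v where "u \<in> V" "v \<in> V" "e = {u, v}"
    using assms(1,5) unfolding simple_graph_def by blast
  moreover have "\<not> e \<subseteq> VA" "\<not> e \<subseteq> VB"
    using assms(3-7) unfolding chordless_in_def by blast+
  ultimately show ?thesis using assms(2) by (auto simp: insert_commute)
qed

lemma permutation_graph_wrt_cycles: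
  assumes "permutation_graph_wrt V E M"
  obtains a b where "\<And>x y. a x = a y \<longleftrightarrow> int (card V div 2) dvd x - y"
    and "\<And>x y. b x = b y \<longleftrightarrow> int (card V div 2) dvd x - y" and "3 \<le> card V div 2"
    and "E = cycle_edges a \<union> cycle_edges b \<union> M" and "crossing_perfect_matching V M a b"
proof -
  define n where "n = card V div 2"
  from assms obtain VA EA VB EB where "cubic V E" and pm: "perfect_matching V E M"
    and V: "V = VA \<union> VB" "VA \<inter> VB = {}" and E_minus_M: "E - M = EA \<union> EB"
    and cyc: "cycle_graph VA EA n" "cycle_graph VB EB n"
    and chordless: "chordless_in E VA EA" "chordless_in E VB EB"
    unfolding permutation_graph_wrt_def n_def by blast
  then have simple: "simple_graph V E" by (simp add: cubic_def)
  obtain a where a_eq: "\<And>x y. a x = a y \<longleftrightarrow> int n dvd x - y" and VA: "range a = VA"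
    and EA: "EA = cycle_edges a" using cycle_graph_parametrisation[OF cyc(1)] by blast
  obtain b where b_eq: "\<And>x y. b x = b y \<longleftrightarrow> int n dvd x - y" and VB: "range b = VB"
    and EB: "EB = cycle_edges b" using cycle_graph_parametrisation[OF cyc(2)] by blast
  have M_sub: "M \<subseteq> E" using pm by (simp add: perfect_matching_def)
  have "crossing_perfect_matching V M a b"
  proof
    show "\<exists>!e. e \<in> M \<and> v \<in> e" if "v \<in> V" for v using pm that by (simp add: perfect_matching_def)
    show "V = range a \<union> range b" using V(1) VA VB by simp
    show "a x \<noteq> b y" for x y using V(2) VA VB by blast
    show "\<exists>x y. e = {a x, b y}" if "e \<in> M" for e
    proof -
      have "e \<notin> EA" "e \<notin> EB" using that E_minus_M by blast+
      then show ?thesis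
        using edge_between_chordless_cycles[OF simple V(1) chordless] that M_sub VA VB by blast
    qed
  qed
  moreover have "3 \<le> n" using cyc(1) by (simp add: cycle_graph_def)
  moreover have "E = cycle_edges a \<union> cycle_edges b \<union> M" using E_minus_M M_sub EA EB by blast
  ultimately show ?thesis using that a_eq b_eq unfolding n_def by blast
qed

lemma permutation_graph_wrt_coordinates:
  assumes pg: "permutation_graph_wrt V E M" and odd: "odd (card V div 2)"
  obtains a b s where "odd_permutation_graph (int (card V div 2)) a b V E s"
    and "M = range (\<lambda>x. {a x, b (s x)})"
proof -
  define n where "n = card V div 2"
  obtain a b where a_eq: "\<And>x y. a x = a y \<longleftrightarrow> int n dvd x - y"
    and b_eq: "\<And>x y. b x = b y \<longleftrightarrow> int n dvd x - y" and "3 \<le> n"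
    and E: "E = cycle_edges a \<union> cycle_edges b \<union> M" and "crossing_perfect_matching V M a b"
    using permutation_graph_wrt_cycles[OF pg] unfolding n_def by blast
  then interpret matching: crossing_perfect_matching V M a b by simp
  have "odd_permutation_graph (int n) a b V E matching.partner"
  proof unfold_locales
    show "3 \<le> int n" "odd (int n)"
      using \<open>3 \<le> n\<close> odd by (simp_all add: n_def)
    show "a x = a y \<longleftrightarrow> int n dvd x - y" "b x = b y \<longleftrightarrow> int n dvd x - y"
      for x y by (simp_all add: a_eq b_eq)
    show "a x \<noteq> b y" for x y by (rule matching.a_neq_b)
    show "int n dvd matching.partner x - matching.partner y \<longleftrightarrow> int n dvd x - y"
      for x y using matching.b_partner_eq_iff[of x y] by (simp add: a_eq b_eq)
    show "\<exists>x. int n dvd matching.partner x - y" for y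
      using matching.b_partner_surj[of y] by (simp add: b_eq)
    show "V = range a \<union> range b" by (rule matching.V_eq)
    show "E = cycle_edges a \<union> cycle_edges b \<union> range (\<lambda>x. {a x, b (matching.partner x)})"
      using E matching.matching_eq by simp
  qed
  then show ?thesis using that matching.matching_eq unfolding n_def by blast
qed

lemma odd_girth_eq_enatD:
  assumes "odd_girth V E = enat m"
  shows "odd m" and "has_cycle V E m" and "\<And>l. odd l \<Longrightarrow> has_cycle V E l \<Longrightarrow> m \<le> l"
proof -
  have ex: "\<exists>k. odd k \<and> has_cycle V E k"
  proof (rule ccontr)
    assume "\<not> (\<exists>k. odd k \<and> has_cycle V E k)"
    then have "odd_girth V E = \<infinity>" unfolding odd_girth_def by (rule if_not_P)
    then show False using assms by simp
  qed
  then have m: "m = (LEAST k. odd k \<and> has_cycle V E k)" using assms by (simp add: odd_girth_def)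
  show "odd m" "has_cycle V E m" using LeastI_ex[OF ex] by (simp_all add: m)
  show "m \<le> l" if "odd l" "has_cycle V E l" for l
    unfolding m by (rule Least_le) (use that in simp)
qed

lemma odd_girth_half_card:
  assumes "2 * odd_girth V E = enat (card V)"
  obtains m where "card V = 2 * m" "odd m" "\<And>l. odd l \<Longrightarrow> has_cycle V E l \<Longrightarrow> m \<le> l"
proof -
  obtain m where "odd_girth V E = enat m" "card V = 2 * m"
    using assms by (cases "odd_girth V E") (auto simp: numeral_eq_enat)
  then show ?thesis using that odd_girth_eq_enatD by blast
qed

theorem mainTheorem3:
  fixes V :: "'a set" and E :: "'a set set"
  assumes "permutation_graph V E \<or> near_permutation_graph V E"
    and "2 * odd_girth V E = enat (card V)"
    and "\<not> three_edge_colourable E"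
  shows "graph_iso V E petersen_V petersen_E \<or>
         (\<exists>e\<in>petersen_E. graph_iso V E petersen_V (petersen_E - {e}))"
proof -
  obtain E' M where pg: "permutation_graph_wrt V E' M" and E: "E = E' \<or> (\<exists>e\<in>M. E = E' - {e})"
    using assms(1) unfolding permutation_graph_def near_permutation_graph_def by blast
  obtain m where card: "card V = 2 * m" and "odd m"
    and short: "\<And>l. odd l \<Longrightarrow> has_cycle V E l \<Longrightarrow> m \<le> l"
    using odd_girth_half_card[OF assms(2)] by blast
  have half: "card V div 2 = m" using card by simp
  obtain a b s where graph: "odd_permutation_graph (int m) a b V E' s"
    and M: "M = range (\<lambda>x. {a x, b (s x)})"
    using permutation_graph_wrt_coordinates[OF pg] \<open>odd m\<close> unfolding half by blast
  interpret odd_permutation_graph "int m" a b V E' s by (rule graph)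
  obtain r where "E = E' \<or> E = E' - {{a r, b (s r)}}" using E M by blast
  then show ?thesis by (rule petersen_if_not_colourable) (use short assms(3) in simp_all)
qed

end
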